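(* Let $Y$ be a random simplicial complex on $[n]=\{0,\dots,n\}$ drawn from the lower model in the medial regime, with constants $0<p\le P<1$ such that $p\le p_\sigma\le P$ for all $\sigma$. Then $Y$ is simply connected (connected with trivial fundamental group) asymptotically almost surely, i.e. with probability tending to $1$ as $n\to\infty$.
   Context: Lower model: each non-empty proper subset $\sigma\subsetneq[n]$ is included independently with probability $p_\sigma$ into a random hypergraph $X$, and $Y$ is the largest simplicial complex contained in $X$ ($\sigma\in Y$ iff every non-empty $\tau\subseteq\sigma$ lies in $X$). Medial regime: $p,P\in(0,1)$ are independent of $n$. *)

theory Defs
  imports "HOL-Analysis.Analysis" "HOL-Probability.Probability"
begin

definition lower_faces :: "nat \<Rightarrow> nat set set" where
  "lower_faces n = {\<sigma>. \<sigma> \<noteq> {} \<and> \<sigma> \<subset> {0..n}}"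

text \<open>The random hypergraph X: each potential face sigma is included independently
  with probability q sigma (a hypergraph is represented by its indicator function;
  sets outside lower_faces n are never included).\<close>
definition lower_hypergraph :: "nat \<Rightarrow> (nat set \<Rightarrow> real) \<Rightarrow> (nat set \<Rightarrow> bool) pmf" where
  "lower_hypergraph n q = Pi_pmf (lower_faces n) False (\<lambda>\<sigma>. bernoulli_pmf (q \<sigma>))"

text \<open>The largest simplicial complex contained in X.\<close>
definition lower_complex :: "(nat set \<Rightarrow> bool) \<Rightarrow> nat set set" where
  "lower_complex X = {\<sigma>. \<sigma> \<noteq> {} \<and> (\<forall>\<tau>. \<tau> \<noteq> {} \<and> \<tau> \<subseteq> \<sigma> \<longrightarrow> X \<tau>)}"

text \<open>Geometric realization: vertex v is sent to the standard basis vector e_v in the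
  normed space of bounded functions nat => real (sup norm); a face is sent to the
  convex hull of its vertices.\<close>
definition vertex_pt :: "nat \<Rightarrow> (nat \<Rightarrow>\<^sub>C real)" where
  "vertex_pt v = Bcontfun (\<lambda>i. if i = v then 1 else 0)"

definition realization :: "nat set set \<Rightarrow> (nat \<Rightarrow>\<^sub>C real) set" where
  "realization K = (\<Union>\<sigma>\<in>K. convex hull (vertex_pt ` \<sigma>))"

end

theory Submission
  imports Defs "HOL-Real_Asymp.Real_Asymp"
begin

(* Call a complex coned if every set S of at most five vertices has a cone vertex w: w * tau
   is a face for every face tau of S with at most two vertices. Such a complex is simply
   connected. Fix a base vertex b; a cone vertex c_a of {b, a} gives a spoke b -> c_a -> a to
   every vertex a. For an edge ab, the loop spoke(a) . ab . spoke(b)^-1 lies in the cone over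
   {b, c_a, a, b, c_b}, which is star-shaped, so it is null-homotopic. Joining each point x to
   b through a vertex of a simplex containing x, a path inside the open star of a vertex v
   closes up to a null-homotopic loop, because the connecting paths of all its points factor
   through spoke(v). Every point has a barycentric coordinate at least 1/|V|, so by uniform
   continuity any path is cut into such pieces.

   In the lower model with all p_sigma >= p, a fixed set S of at most five vertices is coned
   by a fixed w outside S with probability at least p^32, independently for different w since
   these events involve disjoint sets of faces. Hence S has no cone vertex with probability
   at most (1 - p^32)^(n-4), and a union bound over the at most (n+1)^5 sets S shows that the
   complex fails to be coned with probability tending to 0. *)

lemma vertex_pt_apply [simp]: "apply_bcontfun (vertex_pt v) i = (if i = v then 1 else 0)"
proof -
  have "(\<lambda>i::nat. if i = v then 1 else (0::real)) \<in> bcontfun"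
    by (rule bcontfun_normI) auto
  then show ?thesis unfolding vertex_pt_def by (simp add: Bcontfun_inverse)
qed

abbreviation geom_simplex :: "nat set \<Rightarrow> (nat \<Rightarrow>\<^sub>C real) set" where
  "geom_simplex \<sigma> \<equiv> convex hull (vertex_pt ` \<sigma>)"

lemma vertex_pt_mem_geom_simplex: "v \<in> \<sigma> \<Longrightarrow> vertex_pt v \<in> geom_simplex \<sigma>"
  by (simp add: hull_inc)

lemma closed_segment_subset_geom_simplex:
  "x \<in> geom_simplex \<sigma> \<Longrightarrow> y \<in> geom_simplex \<sigma> \<Longrightarrow> closed_segment x y \<subseteq> geom_simplex \<sigma>"
  by (simp add: closed_segment_subset convex_convex_hull)

lemma coord_pos_imp_mem_geom_simplex:
  assumes "x \<in> geom_simplex \<sigma>" "0 < apply_bcontfun x v"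
  shows "v \<in> \<sigma>"
proof (rule ccontr)
  assume "v \<notin> \<sigma>"
  then have "vertex_pt ` \<sigma> \<subseteq> {f. apply_bcontfun f v = 0}" by auto
  moreover have "convex {f :: nat \<Rightarrow>\<^sub>C real. apply_bcontfun f v = 0}"
    by (auto simp: convex_def)
  ultimately have "apply_bcontfun x v = 0" using assms(1) hull_minimal by blast
  with assms(2) show False by simp
qed

lemma geom_simplex_exists_large_coord:
  assumes "x \<in> geom_simplex \<sigma>" "finite \<sigma>" "\<sigma> \<noteq> {}"
  shows "\<exists>v\<in>\<sigma>. 1 / real (card \<sigma>) \<le> apply_bcontfun x v"
proof (rule ccontr)
  assume "\<not> ?thesis"
  then have "(\<Sum>u\<in>\<sigma>. apply_bcontfun x u) < real (card \<sigma>) * (1 / real (card \<sigma>))"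
    using assms(2,3) by (intro sum_bounded_above_strict) (auto simp: not_le card_gt_0_iff)
  also have "\<dots> = 1" using assms(2,3) by simp
  finally have "(\<Sum>u\<in>\<sigma>. apply_bcontfun x u) < 1" .
  moreover have "convex {f :: nat \<Rightarrow>\<^sub>C real. (\<Sum>u\<in>\<sigma>. apply_bcontfun f u) = 1}"
    by (auto simp: convex_def sum.distrib sum_distrib_left[symmetric])
  moreover have "vertex_pt ` \<sigma> \<subseteq> {f. (\<Sum>u\<in>\<sigma>. apply_bcontfun f u) = 1}"
    using assms(2) by (auto simp: sum.delta)
  ultimately show False using assms(1) hull_minimal by fastforce
qed

lemma abs_apply_bcontfun_diff_le_dist:
  "\<bar>apply_bcontfun f x - apply_bcontfun g x\<bar> \<le> dist f (g :: 'a::topological_space \<Rightarrow>\<^sub>C real)"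
  using dist_bounded[of f x g] by (simp add: dist_real_def)

lemma homotopic_paths_in_starlike_subset:
  fixes p q :: "real \<Rightarrow> 'a::real_normed_vector"
  assumes "starlike T" "T \<subseteq> S" "path p" "path q" "path_image p \<subseteq> T" "path_image q \<subseteq> T"
    "pathstart q = pathstart p" "pathfinish q = pathfinish p"
  shows "homotopic_paths S p q"
proof -
  have "homotopic_paths T p q"
    using starlike_imp_simply_connected[OF assms(1)] assms(3-8)
    unfolding simply_connected_eq_homotopic_paths by blast
  then show ?thesis using assms(2) by (rule homotopic_paths_subset)
qed

lemma homotopic_paths_join_assoc_left:
  assumes "homotopic_paths S (q +++ r) r'" "path p" "path_image p \<subseteq> S"
    "pathfinish p = pathstart q" "pathfinish q = pathstart r"
  shows "homotopic_paths S ((p +++ q) +++ r) (p +++ r')"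
proof -
  have "path q" "path r" "path_image q \<subseteq> S" "path_image r \<subseteq> S"
    using homotopic_paths_imp_path[OF assms(1)] homotopic_paths_imp_subset[OF assms(1)] assms(5)
    by (auto simp: path_image_join)
  then have "homotopic_paths S ((p +++ q) +++ r) (p +++ (q +++ r))"
    using assms(2-5) by (intro homotopic_paths_sym[OF homotopic_paths_assoc]) auto
  also have "homotopic_paths S (p +++ (q +++ r)) (p +++ r')"
    using assms by (intro homotopic_paths_join) auto
  finally show ?thesis .
qed

lemma homotopic_paths_join_cancel_left:
  fixes b :: "real \<Rightarrow> 'a::real_normed_vector"
  assumes "homotopic_paths S (b +++ p) (b +++ q)" "path b" "path_image b \<subseteq> S"
    "pathfinish b = pathstart p" "pathfinish b = pathstart q"
  shows "homotopic_paths S p q"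
proof -
  have unwind: "homotopic_paths S (reversepath b +++ (b +++ r)) r"
    if r: "path r" "path_image r \<subseteq> S" "pathstart r = pathfinish b" for r
  proof -
    have "homotopic_paths S (reversepath b +++ (b +++ r)) ((reversepath b +++ b) +++ r)"
      using r assms(2,3) by (intro homotopic_paths_assoc) auto
    also have "homotopic_paths S \<dots> (linepath (pathstart r) (pathstart r) +++ r)"
      using r homotopic_paths_linv[OF assms(2,3)] by (intro homotopic_paths_join) auto
    also have "homotopic_paths S \<dots> r"
      using r by (intro homotopic_paths_lid)
    finally show ?thesis .
  qed
  have "path p" "path q" "path_image p \<subseteq> S" "path_image q \<subseteq> S"
    using homotopic_paths_imp_path[OF assms(1)] homotopic_paths_imp_subset[OF assms(1)] assms(4,5)
    by (auto simp: path_image_join)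
  then have "homotopic_paths S p (reversepath b +++ (b +++ p))"
    using unwind assms(4) homotopic_paths_sym by metis
  also have "homotopic_paths S \<dots> (reversepath b +++ (b +++ q))"
    by (rule homotopic_paths_join) (use assms in auto)
  also have "homotopic_paths S \<dots> q"
    using unwind \<open>path q\<close> \<open>path_image q \<subseteq> S\<close> assms(5) by metis
  finally show ?thesis .
qed

locale connecting_paths =
  fixes S :: "'a::real_normed_vector set" and b :: 'a and \<beta> :: "'a \<Rightarrow> real \<Rightarrow> 'a"
  assumes path_connecting: "x \<in> S \<Longrightarrow> path (\<beta> x)"
    and path_image_connecting: "x \<in> S \<Longrightarrow> path_image (\<beta> x) \<subseteq> S"
    and pathstart_connecting: "x \<in> S \<Longrightarrow> pathstart (\<beta> x) = b"
    and pathfinish_connecting: "x \<in> S \<Longrightarrow> pathfinish (\<beta> x) = x"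
begin

definition trivial_path :: "(real \<Rightarrow> 'a) \<Rightarrow> bool" where
  "trivial_path g \<longleftrightarrow> homotopic_paths S (\<beta> (pathstart g) +++ g) (\<beta> (pathfinish g))"

lemma trivial_path_join:
  assumes "trivial_path g" "trivial_path h" "path g" "path h" "path_image g \<subseteq> S"
    "path_image h \<subseteq> S" "pathfinish g = pathstart h"
  shows "trivial_path (g +++ h)"
proof -
  have ends: "pathstart g \<in> S" "pathfinish g \<in> S"
    using assms(5) pathstart_in_path_image pathfinish_in_path_image by blast+
  have "homotopic_paths S (\<beta> (pathstart g) +++ (g +++ h)) ((\<beta> (pathstart g) +++ g) +++ h)"
    using ends assms by (intro homotopic_paths_assoc)
      (auto simp: path_connecting path_image_connecting pathfinish_connecting)
  also have "homotopic_paths S \<dots> (\<beta> (pathfinish g) +++ h)"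
    using assms(1) ends assms(4,6,7) by (intro homotopic_paths_join) (auto simp: trivial_path_def)
  also have "homotopic_paths S \<dots> (\<beta> (pathfinish h))"
    using assms(2,7) by (simp add: trivial_path_def)
  finally show ?thesis using assms(7) by (simp add: trivial_path_def)
qed

lemma trivial_path_homotopic:
  assumes "trivial_path g" "homotopic_paths S g h"
  shows "trivial_path h"
proof -
  have ends: "pathstart h = pathstart g" "pathfinish h = pathfinish g"
    using homotopic_paths_imp_pathstart[OF assms(2)] homotopic_paths_imp_pathfinish[OF assms(2)]
    by auto
  have "pathstart g \<in> S"
    using homotopic_paths_imp_subset[OF assms(2)] pathstart_in_path_image by blast
  then have "homotopic_paths S (\<beta> (pathstart g) +++ h) (\<beta> (pathstart g) +++ g)"
    by (intro homotopic_paths_join homotopic_paths_sym[OF assms(2)])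
      (auto simp: ends path_connecting path_image_connecting pathfinish_connecting)
  also have "homotopic_paths S \<dots> (\<beta> (pathfinish g))"
    using assms(1) by (simp add: trivial_path_def)
  finally show ?thesis by (simp add: trivial_path_def ends)
qed

lemma trivial_path_if_short_subpaths_trivial:
  assumes g: "path g" "path_image g \<subseteq> S" and "0 < d"
    and short: "\<And>u w. 0 \<le> u \<Longrightarrow> u \<le> w \<Longrightarrow> w \<le> 1 \<Longrightarrow> w - u < d \<Longrightarrow> trivial_path (subpath u w g)"
  shows "trivial_path g"
proof -
  obtain N :: nat where N: "N \<noteq> 0" "inverse (real N) < d"
    using real_arch_inverse \<open>0 < d\<close> by blast
  have sub: "path (subpath u w g)" "path_image (subpath u w g) \<subseteq> S"
    if "u \<in> {0..1}" "w \<in> {0..1}" for u w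
    using g that path_image_subpath_subset[of u w g] by auto
  have "trivial_path (subpath 0 (real k / real N) g)" if "k \<le> N" for k
    using that
  proof (induction k)
    case 0
    then show ?case using short[of 0 0] \<open>0 < d\<close> by simp
  next
    case (Suc k)
    define a a' where "a = real k / real N" and "a' = real (Suc k) / real N"
    have a: "0 \<le> a" "a \<le> a'" "a' \<le> 1" "a' - a < d"
      using Suc.prems N unfolding a_def a'_def by (auto simp: divide_simps)
    have "trivial_path (subpath 0 a g)"
      using Suc unfolding a_def by simp
    then have "trivial_path (subpath 0 a g +++ subpath a a' g)"
      using a short[of a a'] sub by (intro trivial_path_join) auto
    then have "trivial_path (subpath 0 a' g)"
      by (rule trivial_path_homotopic, intro homotopic_join_subpaths1) (use g a in auto)
    then show ?case by (simp add: a'_def)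
  qed
  from this[of N] N show ?thesis by simp
qed

lemma simply_connected_if_all_paths_trivial:
  assumes "\<And>g. path g \<Longrightarrow> path_image g \<subseteq> S \<Longrightarrow> trivial_path g"
  shows "simply_connected S"
  unfolding simply_connected_eq_homotopic_paths
proof (intro conjI allI impI)
  show "path_connected S"
    unfolding path_connected_def
  proof (intro ballI)
    fix x y assume "x \<in> S" "y \<in> S"
    then show "\<exists>g. path g \<and> path_image g \<subseteq> S \<and> pathstart g = x \<and> pathfinish g = y"
      by (intro exI[of _ "reversepath (\<beta> x) +++ \<beta> y"])
        (auto simp: path_image_join path_connecting path_image_connecting
          pathstart_connecting pathfinish_connecting)
  qed
  fix p q
  assume pq: "path p \<and> path_image p \<subseteq> S \<and> path q \<and> path_image q \<subseteq> S \<and>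
    pathstart q = pathstart p \<and> pathfinish q = pathfinish p"
  have "pathstart p \<in> S" using pq pathstart_in_path_image by blast
  have "homotopic_paths S (\<beta> (pathstart p) +++ p) (\<beta> (pathfinish p))"
    "homotopic_paths S (\<beta> (pathstart p) +++ q) (\<beta> (pathfinish p))"
    using assms[of p] assms[of q] pq unfolding trivial_path_def by auto
  then have "homotopic_paths S (\<beta> (pathstart p) +++ p) (\<beta> (pathstart p) +++ q)"
    by (metis homotopic_paths_sym homotopic_paths_trans)
  then show "homotopic_paths S p q"
    by (rule homotopic_paths_join_cancel_left) (use pq \<open>pathstart p \<in> S\<close> in
      \<open>auto simp: path_connecting path_image_connecting pathfinish_connecting\<close>)
qed

lemma trivial_path_in_star:
  assumes TS: "T \<subseteq> S" and star: "\<And>x. x \<in> T \<Longrightarrow> closed_segment c x \<subseteq> T"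
    and \<gamma>: "path \<gamma>" "path_image \<gamma> \<subseteq> S" "pathfinish \<gamma> = c"
    and through_\<gamma>: "\<And>x. x \<in> T \<Longrightarrow> homotopic_paths S (\<beta> x) (\<gamma> +++ linepath c x)"
    and h: "path h" "path_image h \<subseteq> T"
  shows "trivial_path h"
proof -
  let ?s = "pathstart h" and ?f = "pathfinish h"
  have ends: "?s \<in> T" "?f \<in> T"
    using h(2) pathstart_in_path_image pathfinish_in_path_image by blast+
  have "starlike T"
    unfolding starlike_def using ends(1) star by blast
  have "homotopic_paths S (\<beta> ?s +++ h) ((\<gamma> +++ linepath c ?s) +++ h)"
    using through_\<gamma>[OF ends(1)] h TS ends(1)
    by (intro homotopic_paths_join) (auto simp: pathfinish_connecting)
  also have "homotopic_paths S \<dots> (\<gamma> +++ linepath c ?f)"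
    by (rule homotopic_paths_join_assoc_left[OF _ \<gamma>(1,2)],
        rule homotopic_paths_in_starlike_subset[OF \<open>starlike T\<close> TS])
      (use h star ends \<gamma>(3) in \<open>auto simp: path_image_join\<close>)
  also have "homotopic_paths S \<dots> (\<beta> ?f)"
    using through_\<gamma>[OF ends(2)] homotopic_paths_sym by blast
  finally show ?thesis unfolding trivial_path_def .
qed

end

locale coned_complex =
  fixes V :: "nat set" and Y :: "nat set set"
  assumes finite_vertices: "finite V" and vertices_nonempty: "V \<noteq> {}"
    and face_subset: "\<sigma> \<in> Y \<Longrightarrow> \<sigma> \<noteq> {} \<and> \<sigma> \<subseteq> V"
    and face_downward_closed: "\<sigma> \<in> Y \<Longrightarrow> \<tau> \<noteq> {} \<Longrightarrow> \<tau> \<subseteq> \<sigma> \<Longrightarrow> \<tau> \<in> Y"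
    and cone_vertex_exists: "S \<noteq> {} \<Longrightarrow> S \<subseteq> V \<Longrightarrow> card S \<le> 5 \<Longrightarrow>
      \<exists>w. {w} \<in> Y \<and> (\<forall>\<tau>\<in>Y. \<tau> \<subseteq> S \<and> card \<tau> \<le> 2 \<longrightarrow> insert w \<tau> \<in> Y)"
begin

lemma finite_face: "\<sigma> \<in> Y \<Longrightarrow> finite \<sigma>"
  using face_subset finite_vertices finite_subset by blast

lemma vertex_of_face: "\<sigma> \<in> Y \<Longrightarrow> v \<in> \<sigma> \<Longrightarrow> {v} \<in> Y"
  using face_downward_closed by blast

lemma geom_simplex_subset_realization: "\<sigma> \<in> Y \<Longrightarrow> geom_simplex \<sigma> \<subseteq> realization Y"
  unfolding realization_def by blast

lemma edge_subset_realization: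
  "{a, b} \<in> Y \<Longrightarrow> closed_segment (vertex_pt a) (vertex_pt b) \<subseteq> realization Y"
  using closed_segment_subset_geom_simplex[OF vertex_pt_mem_geom_simplex vertex_pt_mem_geom_simplex]
    geom_simplex_subset_realization by blast

lemma realization_exists_large_coord:
  assumes "x \<in> realization Y"
  shows "\<exists>v. 1 / real (card V) \<le> apply_bcontfun x v"
proof -
  obtain \<sigma> where \<sigma>: "\<sigma> \<in> Y" "x \<in> geom_simplex \<sigma>"
    using assms unfolding realization_def by blast
  then obtain v where v: "1 / real (card \<sigma>) \<le> apply_bcontfun x v"
    using geom_simplex_exists_large_coord finite_face face_subset by blast
  have "0 < card \<sigma>" "card \<sigma> \<le> card V"
    using \<sigma>(1) face_subset finite_face finite_vertices by (auto simp: card_gt_0_iff card_mono)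
  then have "1 / real (card V) \<le> 1 / real (card \<sigma>)"
    by (simp add: field_simps)
  with v show ?thesis by (meson order_trans)
qed

definition base :: nat where
  "base = (SOME w. {w} \<in> Y)"

lemma base_vertex: "{base} \<in> Y"
proof -
  obtain u where "u \<in> V" using vertices_nonempty by blast
  then obtain w where "{w} \<in> Y" using cone_vertex_exists[of "{u}"] by auto
  then show ?thesis unfolding base_def by (rule someI)
qed

definition hub :: "nat \<Rightarrow> nat" where
  "hub a = (SOME w. {base, w} \<in> Y \<and> {w, a} \<in> Y)"

lemma hub_edges:
  assumes "{a} \<in> Y"
  shows "{base, hub a} \<in> Y" "{hub a, a} \<in> Y"
proof -
  have "{base, a} \<subseteq> V" "card {base, a} \<le> 5"
    using face_subset base_vertex assms by (auto simp: card_insert_if)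
  then obtain w where "\<forall>\<tau>\<in>Y. \<tau> \<subseteq> {base, a} \<and> card \<tau> \<le> 2 \<longrightarrow> insert w \<tau> \<in> Y"
    using cone_vertex_exists[of "{base, a}"] by auto
  then have "{base, w} \<in> Y \<and> {w, a} \<in> Y"
    using base_vertex assms by (auto simp: insert_commute)
  then show "{base, hub a} \<in> Y" "{hub a, a} \<in> Y"
    unfolding hub_def by (metis (mono_tags, lifting) someI)+
qed

definition spoke :: "nat \<Rightarrow> real \<Rightarrow> nat \<Rightarrow>\<^sub>C real" where
  "spoke a = linepath (vertex_pt base) (vertex_pt (hub a)) +++ linepath (vertex_pt (hub a)) (vertex_pt a)"

lemma
  assumes "{a} \<in> Y"
  shows path_spoke: "path (spoke a)"
    and path_image_spoke: "path_image (spoke a) \<subseteq> realization Y"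
    and pathstart_spoke: "pathstart (spoke a) = vertex_pt base"
    and pathfinish_spoke: "pathfinish (spoke a) = vertex_pt a"
  using edge_subset_realization[OF hub_edges(1)[OF assms]]
    edge_subset_realization[OF hub_edges(2)[OF assms]]
  unfolding spoke_def by (auto simp: path_image_join)

lemma starlike_cone_over_small_set:
  assumes "S \<noteq> {}" "S \<subseteq> V" "card S \<le> 5"
  obtains T where "starlike T" "T \<subseteq> realization Y"
    "\<And>x y. {x, y} \<in> Y \<Longrightarrow> x \<in> S \<Longrightarrow> y \<in> S \<Longrightarrow> closed_segment (vertex_pt x) (vertex_pt y) \<subseteq> T"
proof -
  obtain w where w: "{w} \<in> Y" "\<And>\<tau>. \<tau> \<in> Y \<Longrightarrow> \<tau> \<subseteq> S \<Longrightarrow> card \<tau> \<le> 2 \<Longrightarrow> insert w \<tau> \<in> Y"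
    using cone_vertex_exists[OF assms] by blast
  define bases where "bases = insert {} {\<tau> \<in> Y. \<tau> \<subseteq> S \<and> card \<tau> \<le> 2}"
  define T where "T = (\<Union>\<tau>\<in>bases. geom_simplex (insert w \<tau>))"
  have "insert w \<tau> \<in> Y" if "\<tau> \<in> bases" for \<tau>
    using that w unfolding bases_def by auto
  then have "T \<subseteq> realization Y"
    unfolding T_def using geom_simplex_subset_realization by blast
  moreover have "starlike T"
    unfolding starlike_def
  proof (intro bexI ballI)
    show "vertex_pt w \<in> T"
      unfolding T_def bases_def using vertex_pt_mem_geom_simplex[of w "{w}"] by auto
    fix x assume "x \<in> T"
    then obtain \<tau> where "\<tau> \<in> bases" "x \<in> geom_simplex (insert w \<tau>)"
      unfolding T_def by blast
    moreover have "closed_segment (vertex_pt w) x \<subseteq> geom_simplex (insert w \<tau>)"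
      using calculation(2) by (intro closed_segment_subset_geom_simplex vertex_pt_mem_geom_simplex) auto
    ultimately show "closed_segment (vertex_pt w) x \<subseteq> T" unfolding T_def by blast
  qed
  moreover have "closed_segment (vertex_pt x) (vertex_pt y) \<subseteq> T"
    if "{x, y} \<in> Y" "x \<in> S" "y \<in> S" for x y
  proof -
    have "{x, y} \<in> bases" using that unfolding bases_def by (simp add: card_insert_if)
    moreover have "closed_segment (vertex_pt x) (vertex_pt y) \<subseteq> geom_simplex (insert w {x, y})"
      by (intro closed_segment_subset_geom_simplex vertex_pt_mem_geom_simplex) auto
    ultimately show ?thesis unfolding T_def by blast
  qed
  ultimately show ?thesis using that by blast
qed

lemma spoke_edge_homotopic:
  assumes ab: "{a, b} \<in> Y"
  shows "homotopic_paths (realization Y) (spoke a +++ linepath (vertex_pt a) (vertex_pt b)) (spoke b)"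
proof -
  have "{a} \<in> Y" "{b} \<in> Y" using vertex_of_face[OF ab] by auto
  then have edges: "{base, hub a} \<in> Y" "{hub a, a} \<in> Y" "{base, hub b} \<in> Y" "{hub b, b} \<in> Y"
    using hub_edges by auto
  define S where "S = {base, hub a, a, b, hub b}"
  have "S \<noteq> {}" unfolding S_def by simp
  moreover have "S \<subseteq> V" unfolding S_def using edges face_subset by auto
  moreover have "card S \<le> 5"
    unfolding S_def using card_length[of "[base, hub a, a, b, hub b]"] by simp
  ultimately obtain T where T: "starlike T" "T \<subseteq> realization Y"
    "\<And>x y. {x, y} \<in> Y \<Longrightarrow> x \<in> S \<Longrightarrow> y \<in> S \<Longrightarrow> closed_segment (vertex_pt x) (vertex_pt y) \<subseteq> T"
    using starlike_cone_over_small_set by blast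
  have "path_image (spoke a +++ linepath (vertex_pt a) (vertex_pt b)) \<subseteq> T"
    "path_image (spoke b) \<subseteq> T"
    using T(3) edges ab unfolding spoke_def by (auto simp: path_image_join S_def)
  then show ?thesis
    using T(1,2) \<open>{a} \<in> Y\<close> \<open>{b} \<in> Y\<close>
    by (intro homotopic_paths_in_starlike_subset) (auto simp: path_spoke pathstart_spoke pathfinish_spoke)
qed

definition carrier_vertex :: "(nat \<Rightarrow>\<^sub>C real) \<Rightarrow> nat" where
  "carrier_vertex x = (SOME v. \<exists>\<sigma>\<in>Y. v \<in> \<sigma> \<and> x \<in> geom_simplex \<sigma>)"

lemma carrier_vertex:
  assumes "x \<in> realization Y"
  shows "\<exists>\<sigma>\<in>Y. carrier_vertex x \<in> \<sigma> \<and> x \<in> geom_simplex \<sigma>"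
proof -
  obtain \<sigma> where "\<sigma> \<in> Y" "x \<in> geom_simplex \<sigma>"
    using assms unfolding realization_def by blast
  moreover obtain v where "v \<in> \<sigma>" using face_subset[OF \<open>\<sigma> \<in> Y\<close>] by blast
  ultimately have "\<exists>v. \<exists>\<sigma>\<in>Y. v \<in> \<sigma> \<and> x \<in> geom_simplex \<sigma>" by blast
  then show ?thesis unfolding carrier_vertex_def by (rule someI_ex)
qed

definition connecting_path :: "(nat \<Rightarrow>\<^sub>C real) \<Rightarrow> real \<Rightarrow> nat \<Rightarrow>\<^sub>C real" where
  "connecting_path x = spoke (carrier_vertex x) +++ linepath (vertex_pt (carrier_vertex x)) x"

sublocale connecting_paths "realization Y" "vertex_pt base" connecting_path
proof
  fix x assume x: "x \<in> realization Y"
  then obtain \<sigma> where \<sigma>: "\<sigma> \<in> Y" "carrier_vertex x \<in> \<sigma>" "x \<in> geom_simplex \<sigma>"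
    using carrier_vertex by blast
  have "closed_segment (vertex_pt (carrier_vertex x)) x \<subseteq> realization Y"
    using closed_segment_subset_geom_simplex[OF vertex_pt_mem_geom_simplex[OF \<sigma>(2)] \<sigma>(3)]
      geom_simplex_subset_realization[OF \<sigma>(1)] by blast
  moreover have "{carrier_vertex x} \<in> Y" using vertex_of_face \<sigma> by blast
  ultimately show "path (connecting_path x)" "path_image (connecting_path x) \<subseteq> realization Y"
    "pathstart (connecting_path x) = vertex_pt base" "pathfinish (connecting_path x) = x"
    unfolding connecting_path_def
    by (auto simp: path_image_join path_spoke path_image_spoke pathstart_spoke pathfinish_spoke)
qed

lemma connecting_path_homotopic_spoke:
  assumes x: "x \<in> realization Y" and v: "0 < apply_bcontfun x v"
  shows "homotopic_paths (realization Y) (connecting_path x) (spoke v +++ linepath (vertex_pt v) x)"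
proof -
  let ?c = "carrier_vertex x"
  obtain \<sigma> where \<sigma>: "\<sigma> \<in> Y" "?c \<in> \<sigma>" "x \<in> geom_simplex \<sigma>"
    using carrier_vertex[OF x] by blast
  have "v \<in> \<sigma>" using coord_pos_imp_mem_geom_simplex[OF \<sigma>(3) v] .
  then have "{v, ?c} \<in> Y" "{v} \<in> Y" "{?c} \<in> Y"
    using face_downward_closed[OF \<sigma>(1)] \<sigma>(2) by auto
  have simplex: "geom_simplex \<sigma> \<subseteq> realization Y" "starlike (geom_simplex \<sigma>)"
    using geom_simplex_subset_realization[OF \<sigma>(1)] \<open>v \<in> \<sigma>\<close>
    by (auto intro!: convex_imp_starlike simp: convex_convex_hull)
  have segments: "closed_segment (vertex_pt v) (vertex_pt ?c) \<subseteq> geom_simplex \<sigma>"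
    "closed_segment (vertex_pt ?c) x \<subseteq> geom_simplex \<sigma>"
    "closed_segment (vertex_pt v) x \<subseteq> geom_simplex \<sigma>"
    using \<sigma> \<open>v \<in> \<sigma>\<close>
    by (simp_all add: closed_segment_subset_geom_simplex vertex_pt_mem_geom_simplex)
  have "homotopic_paths (realization Y) (connecting_path x)
      ((spoke v +++ linepath (vertex_pt v) (vertex_pt ?c)) +++ linepath (vertex_pt ?c) x)"
    unfolding connecting_path_def
    using homotopic_paths_sym[OF spoke_edge_homotopic[OF \<open>{v, ?c} \<in> Y\<close>]] segments simplex
      \<open>{?c} \<in> Y\<close> by (intro homotopic_paths_join) (auto simp: pathfinish_spoke)
  also have "homotopic_paths (realization Y) \<dots> (spoke v +++ linepath (vertex_pt v) x)"
    by (rule homotopic_paths_join_assoc_left, rule homotopic_paths_in_starlike_subset[OF simplex(2,1)])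
      (use segments \<open>{v} \<in> Y\<close> in \<open>auto simp: path_image_join path_spoke path_image_spoke pathfinish_spoke\<close>)
  finally show ?thesis .
qed

definition open_star :: "nat \<Rightarrow> (nat \<Rightarrow>\<^sub>C real) set" where
  "open_star v = {x \<in> realization Y. 0 < apply_bcontfun x v}"

lemma closed_segment_subset_open_star:
  assumes x: "x \<in> open_star v"
  shows "closed_segment (vertex_pt v) x \<subseteq> open_star v"
proof
  fix y assume y: "y \<in> closed_segment (vertex_pt v) x"
  obtain \<sigma> where \<sigma>: "\<sigma> \<in> Y" "x \<in> geom_simplex \<sigma>"
    using x unfolding open_star_def realization_def by blast
  have "v \<in> \<sigma>" using coord_pos_imp_mem_geom_simplex \<sigma>(2) x unfolding open_star_def by blast
  then have "y \<in> realization Y"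
    using closed_segment_subset_geom_simplex[OF vertex_pt_mem_geom_simplex \<sigma>(2)]
      geom_simplex_subset_realization[OF \<sigma>(1)] y by blast
  moreover obtain t where t: "0 \<le> t" "t \<le> 1" "y = (1 - t) *\<^sub>R vertex_pt v + t *\<^sub>R x"
    using y unfolding closed_segment_def by blast
  have "0 < (1 - t) + t * apply_bcontfun x v"
    using x t(1,2) unfolding open_star_def
    by (cases "t = 1") (auto intro: add_pos_nonneg)
  ultimately show "y \<in> open_star v" unfolding open_star_def by (simp add: t(3))
qed

lemma trivial_path_in_open_star:
  assumes "path h" "path_image h \<subseteq> open_star v"
  shows "trivial_path h"
proof -
  have "pathstart h \<in> open_star v" using assms(2) pathstart_in_path_image by blast
  then obtain \<sigma> where "\<sigma> \<in> Y" "pathstart h \<in> geom_simplex \<sigma>" "0 < apply_bcontfun (pathstart h) v"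
    unfolding open_star_def realization_def by blast
  then have "{v} \<in> Y" using coord_pos_imp_mem_geom_simplex vertex_of_face by blast
  show ?thesis
  proof (rule trivial_path_in_star[OF _ closed_segment_subset_open_star])
    show "open_star v \<subseteq> realization Y" unfolding open_star_def by blast
    show "homotopic_paths (realization Y) (connecting_path x) (spoke v +++ linepath (vertex_pt v) x)"
      if "x \<in> open_star v" for x
      using that connecting_path_homotopic_spoke unfolding open_star_def by blast
  qed (use assms \<open>{v} \<in> Y\<close> in \<open>auto simp: path_spoke path_image_spoke pathfinish_spoke\<close>)
qed

lemma short_subpaths_in_open_stars:
  assumes g: "path g" "path_image g \<subseteq> realization Y"
  obtains d where "0 < d"
    "\<And>u w. 0 \<le> u \<Longrightarrow> u \<le> w \<Longrightarrow> w \<le> 1 \<Longrightarrow> w - u < d \<Longrightarrow>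
      \<exists>v. path_image (subpath u w g) \<subseteq> open_star v"
proof -
  define \<epsilon> where "\<epsilon> = 1 / real (card V)"
  have "0 < \<epsilon>"
    unfolding \<epsilon>_def using finite_vertices vertices_nonempty by (simp add: card_gt_0_iff)
  moreover have "uniformly_continuous_on {0..1} g"
    using g(1) unfolding path_def by (intro compact_uniformly_continuous) auto
  ultimately obtain d where d: "0 < d"
    "\<And>s t. s \<in> {0..1} \<Longrightarrow> t \<in> {0..1} \<Longrightarrow> dist t s < d \<Longrightarrow> dist (g t) (g s) < \<epsilon>"
    unfolding uniformly_continuous_on_def by metis
  have short: "\<exists>v. path_image (subpath u w g) \<subseteq> open_star v"
    if uw: "0 \<le> u" "u \<le> w" "w \<le> 1" "w - u < d" for u w
  proof -
    have "g u \<in> realization Y" using g(2) uw unfolding path_image_def by auto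
    then obtain v where v: "\<epsilon> \<le> apply_bcontfun (g u) v"
      using realization_exists_large_coord unfolding \<epsilon>_def by blast
    have "g t \<in> open_star v" if t: "t \<in> {u..w}" for t
    proof -
      have "dist (g t) (g u) < \<epsilon>" using d(2)[of u t] uw t by (auto simp: dist_real_def)
      then have "0 < apply_bcontfun (g t) v"
        using abs_apply_bcontfun_diff_le_dist[of "g t" v "g u"] v by linarith
      moreover have "g t \<in> realization Y" using g(2) uw t unfolding path_image_def by auto
      ultimately show ?thesis unfolding open_star_def by blast
    qed
    then show ?thesis using uw by (intro exI[of _ v]) (auto simp: path_image_subpath)
  qed
  show ?thesis by (rule that[OF d(1) short])
qed

theorem simply_connected_realization: "simply_connected (realization Y)"
proof (rule simply_connected_if_all_paths_trivial)
  fix g assume g: "path g" "path_image g \<subseteq> realization Y"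
  obtain d where "0 < d" and short: "\<And>u w. 0 \<le> u \<Longrightarrow> u \<le> w \<Longrightarrow> w \<le> 1 \<Longrightarrow> w - u < d \<Longrightarrow>
      \<exists>v. path_image (subpath u w g) \<subseteq> open_star v"
    using short_subpaths_in_open_stars[OF g] by blast
  show "trivial_path g"
  proof (rule trivial_path_if_short_subpaths_trivial[OF g \<open>0 < d\<close>])
    fix u w assume uw: "0 \<le> u" "u \<le> w" "w \<le> 1" "w - u < d"
    then show "trivial_path (subpath u w g)"
      using short[OF uw] g(1) by (auto intro: trivial_path_in_open_star)
  qed
qed

end

lemma measure_pmf_prob_pair_times:
  "measure_pmf.prob (pair_pmf M N) (A \<times> B) = measure_pmf.prob M A * measure_pmf.prob N B"
proof -
  have "measure_pmf.prob (pair_pmf M N) (A \<times> B) =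
      measure_pmf.prob (pair_pmf M N) ((A \<inter> set_pmf M) \<times> (B \<inter> set_pmf N))"
    by (subst measure_Int_set_pmf[symmetric]) (auto intro: arg_cong2[where f = measure])
  also have "\<dots> = measure_pmf.prob M (A \<inter> set_pmf M) * measure_pmf.prob N (B \<inter> set_pmf N)"
    by (intro measure_pmf_prob_product) (auto intro: countable_subset[OF _ countable_set_pmf])
  finally show ?thesis by (simp add: measure_Int_set_pmf)
qed

lemma measure_pmf_prob_Collect_not:
  "measure_pmf.prob M {x. \<not> P x} = 1 - measure_pmf.prob M {x. P x}"
proof -
  have "{x. \<not> P x} = space (measure_pmf M) - {x. P x}" by auto
  then show ?thesis using measure_pmf.prob_compl[of "{x. P x}" M] by simp
qed

definition determined_by :: "(('a \<Rightarrow> 'b) \<Rightarrow> bool) \<Rightarrow> 'a set \<Rightarrow> bool" where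
  "determined_by E B \<longleftrightarrow> (\<forall>f g. (\<forall>x\<in>B. f x = g x) \<longrightarrow> E f = E g)"

lemma prob_Pi_pmf_conj_split:
  assumes "finite A" "B \<subseteq> A" "determined_by E B" "determined_by R (A - B)"
  shows "measure_pmf.prob (Pi_pmf A d p) {f. E f \<and> R f} =
    measure_pmf.prob (Pi_pmf B d p) {f. E f} * measure_pmf.prob (Pi_pmf (A - B) d p) {f. R f}"
proof -
  define merge where "merge = (\<lambda>(f, g) x. if x \<in> B then f x else g x :: 'b)"
  have "Pi_pmf A d p = Pi_pmf (B \<union> (A - B)) d p" using assms(2) by (simp add: Un_absorb1)
  also have "\<dots> = map_pmf merge (pair_pmf (Pi_pmf B d p) (Pi_pmf (A - B) d p))"
    unfolding merge_def using assms(1,2) by (intro Pi_pmf_union) (auto intro: finite_subset)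
  finally have split: "Pi_pmf A d p = map_pmf merge (pair_pmf (Pi_pmf B d p) (Pi_pmf (A - B) d p))" .
  have "E (merge (f, g)) = E f" "R (merge (f, g)) = R g" for f g
    using assms(3,4) unfolding determined_by_def merge_def by auto
  then have "merge -` {f. E f \<and> R f} = {f. E f} \<times> {f. R f}" by auto
  then show ?thesis unfolding split measure_map_pmf by (simp add: measure_pmf_prob_pair_times)
qed

lemma prob_Pi_pmf_conj_indep:
  assumes "finite A" "B \<subseteq> A" "determined_by E B" "determined_by R (A - B)"
  shows "measure_pmf.prob (Pi_pmf A d p) {f. E f \<and> R f} =
    measure_pmf.prob (Pi_pmf A d p) {f. E f} * measure_pmf.prob (Pi_pmf A d p) {f. R f}"
proof -
  have true: "determined_by (\<lambda>_. True) C" for C by (simp add: determined_by_def)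
  show ?thesis
    using prob_Pi_pmf_conj_split[OF assms, of d p] prob_Pi_pmf_conj_split[OF assms(1,2,3) true, of d p]
      prob_Pi_pmf_conj_split[OF assms(1,2) true assms(4), of d p] by simp
qed

lemma prob_Pi_pmf_all_indep:
  fixes E :: "'w \<Rightarrow> ('a \<Rightarrow> 'b) \<Rightarrow> bool" and d :: 'b
  assumes "finite A" "finite W" "\<And>w. w \<in> W \<Longrightarrow> D w \<subseteq> A"
    and "\<And>w w'. w \<in> W \<Longrightarrow> w' \<in> W \<Longrightarrow> w \<noteq> w' \<Longrightarrow> D w \<inter> D w' = {}"
    and "\<And>w. w \<in> W \<Longrightarrow> determined_by (E w) (D w)"
  shows "measure_pmf.prob (Pi_pmf A d p) {f. \<forall>w\<in>W. E w f} =
    (\<Prod>w\<in>W. measure_pmf.prob (Pi_pmf A d p) {f. E w f})"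
  using assms(2-5)
proof (induction W rule: finite_induct)
  case empty
  then show ?case by simp
next
  case (insert w W)
  have "determined_by (\<lambda>f. \<forall>w'\<in>W. E w' f) (A - D w)"
    unfolding determined_by_def
  proof (intro allI impI)
    fix f g :: "'a \<Rightarrow> 'b" assume fg: "\<forall>x\<in>A - D w. f x = g x"
    have "E w' f = E w' g" if "w' \<in> W" for w'
    proof -
      have "D w' \<subseteq> A - D w" using insert.prems(1,2)[of w'] insert.hyps(2) that by blast
      then show ?thesis using insert.prems(3)[of w'] that fg unfolding determined_by_def by blast
    qed
    then show "(\<forall>w'\<in>W. E w' f) = (\<forall>w'\<in>W. E w' g)" by blast
  qed
  then have "measure_pmf.prob (Pi_pmf A d p) {f. E w f \<and> (\<forall>w'\<in>W. E w' f)} =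
      measure_pmf.prob (Pi_pmf A d p) {f. E w f} * measure_pmf.prob (Pi_pmf A d p) {f. \<forall>w'\<in>W. E w' f}"
    using insert.prems by (intro prob_Pi_pmf_conj_indep[OF assms(1)]) auto
  also have "measure_pmf.prob (Pi_pmf A d p) {f. \<forall>w'\<in>W. E w' f} =
      (\<Prod>w\<in>W. measure_pmf.prob (Pi_pmf A d p) {f. E w f})"
    using insert.prems by (intro insert.IH) auto
  finally show ?case using insert.hyps by simp
qed

lemma prob_Pi_bernoulli_all_true:
  assumes "finite A" "D \<subseteq> A" "\<And>x. x \<in> D \<Longrightarrow> 0 \<le> r x \<and> r x \<le> 1"
  shows "measure_pmf.prob (Pi_pmf A False (\<lambda>x. bernoulli_pmf (r x))) {f. \<forall>x\<in>D. f x} = (\<Prod>x\<in>D. r x)"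
proof -
  have "{f. \<forall>x\<in>D. f x} = Pi A (\<lambda>x. if x \<in> D then {True} else UNIV)"
    using assms(2) by (auto simp: Pi_def)
  then have "measure_pmf.prob (Pi_pmf A False (\<lambda>x. bernoulli_pmf (r x))) {f. \<forall>x\<in>D. f x} =
      (\<Prod>x\<in>A. measure_pmf.prob (bernoulli_pmf (r x)) (if x \<in> D then {True} else UNIV))"
    using assms(1) by (simp add: measure_Pi_pmf_Pi)
  also have "\<dots> = (\<Prod>x\<in>A. if x \<in> D then r x else 1)"
    using assms(3) by (intro prod.cong) (auto simp: measure_pmf_single)
  also have "\<dots> = (\<Prod>x\<in>D. r x)"
    using assms(1,2) by (simp add: prod.inter_restrict[symmetric] Int_absorb1)
  finally show ?thesis .
qed

definition small_vertex_sets :: "nat \<Rightarrow> nat set set" where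
  "small_vertex_sets n = {S. S \<noteq> {} \<and> S \<subseteq> {0..n} \<and> card S \<le> 5}"

definition cone_faces :: "nat set \<Rightarrow> nat \<Rightarrow> nat set set" where
  "cone_faces S w = insert w ` {\<tau>. \<tau> \<subseteq> S \<and> card \<tau> \<le> 2}"

definition all_small_sets_coned :: "nat \<Rightarrow> (nat set \<Rightarrow> bool) \<Rightarrow> bool" where
  "all_small_sets_coned n X \<longleftrightarrow>
    (\<forall>S\<in>small_vertex_sets n. \<exists>w\<in>{0..n} - S. \<forall>\<sigma>\<in>cone_faces S w. X \<sigma>)"

lemma small_vertex_sets_subset_lists:
  "small_vertex_sets n \<subseteq> set ` {xs. set xs \<subseteq> {0..n} \<and> length xs = 5}"
proof
  fix S assume "S \<in> small_vertex_sets n"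
  then have S: "S \<noteq> {}" "S \<subseteq> {0..n}" "card S \<le> 5" "finite S"
    unfolding small_vertex_sets_def by (auto intro: finite_subset)
  define xs where "xs = sorted_list_of_set S @ replicate (5 - card S) (Min S)"
  have "Min S \<in> S" using S by simp
  then have "set xs = S" "length xs = 5"
    using S by (simp_all add: xs_def set_replicate_conv_if insert_absorb)
  then show "S \<in> set ` {xs. set xs \<subseteq> {0..n} \<and> length xs = 5}" using S(2) by auto
qed

lemma finite_small_vertex_sets: "finite (small_vertex_sets n)"
  using finite_subset[OF small_vertex_sets_subset_lists] finite_lists_length_eq[of "{0..n}" 5] by blast

lemma card_small_vertex_sets_le: "card (small_vertex_sets n) \<le> (n + 1) ^ 5"
proof -
  have "card (small_vertex_sets n) \<le> card (set ` {xs. set xs \<subseteq> {0..n} \<and> length xs = 5})"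
    by (rule card_mono[OF _ small_vertex_sets_subset_lists]) (simp add: finite_lists_length_eq)
  also have "\<dots> \<le> card {xs. set xs \<subseteq> {0..n} \<and> length xs = 5}"
    by (rule card_image_le) (simp add: finite_lists_length_eq)
  also have "\<dots> = (n + 1) ^ 5" by (simp add: card_lists_length_eq)
  finally show ?thesis .
qed

lemma card_cone_faces_le:
  assumes "finite S" "card S \<le> 5"
  shows "card (cone_faces S w) \<le> 32"
proof -
  have "card (cone_faces S w) \<le> card {\<tau>. \<tau> \<subseteq> S \<and> card \<tau> \<le> 2}"
    unfolding cone_faces_def by (rule card_image_le) (use assms(1) in simp)
  also have "\<dots> \<le> card (Pow S)" by (rule card_mono) (use assms(1) in auto)
  also have "\<dots> \<le> 2 ^ 5"
    using assms power_increasing[of "card S" 5 "2::nat"] by (simp add: card_Pow)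
  finally show ?thesis by simp
qed

lemma cone_faces_disjoint:
  "w \<notin> S \<Longrightarrow> w' \<notin> S \<Longrightarrow> w \<noteq> w' \<Longrightarrow> cone_faces S w \<inter> cone_faces S w' = {}"
  unfolding cone_faces_def by blast

lemma cone_faces_subset_lower_faces:
  assumes "S \<subseteq> {0..n}" "w \<le> n" "3 \<le> n"
  shows "cone_faces S w \<subseteq> lower_faces n"
proof
  fix \<sigma> assume "\<sigma> \<in> cone_faces S w"
  then obtain \<tau> where \<tau>: "\<tau> \<subseteq> S" "card \<tau> \<le> 2" "\<sigma> = insert w \<tau>"
    unfolding cone_faces_def by blast
  then have "\<sigma> \<subseteq> {0..n}" "finite \<tau>" using assms(1,2) by (auto intro: finite_subset)
  moreover have "card \<sigma> < card {0..n}"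
    using \<tau> \<open>finite \<tau>\<close> assms(3) by (simp add: card_insert_if)
  ultimately show "\<sigma> \<in> lower_faces n"
    unfolding lower_faces_def using \<tau>(3) by auto
qed

lemma finite_lower_faces: "finite (lower_faces n)"
  by (rule finite_subset[of _ "Pow {0..n}"]) (auto simp: lower_faces_def)

lemma coned_complex_lower_complex:
  assumes X: "X \<in> set_pmf (lower_hypergraph n q)" and coned: "all_small_sets_coned n X"
  shows "coned_complex {0..n} (lower_complex X)"
proof
  fix \<sigma> assume "\<sigma> \<in> lower_complex X"
  then have "\<sigma> \<noteq> {}" "X \<sigma>" unfolding lower_complex_def by auto
  moreover have "X \<sigma> \<Longrightarrow> \<sigma> \<in> lower_faces n"
    using X set_Pi_pmf_subset[OF finite_lower_faces, of n False "\<lambda>\<sigma>. bernoulli_pmf (q \<sigma>)"]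
    unfolding lower_hypergraph_def by auto
  ultimately show "\<sigma> \<noteq> {} \<and> \<sigma> \<subseteq> {0..n}" unfolding lower_faces_def by auto
next
  fix \<sigma> \<tau> assume "\<sigma> \<in> lower_complex X" "\<tau> \<noteq> {}" "\<tau> \<subseteq> \<sigma>"
  then show "\<tau> \<in> lower_complex X" unfolding lower_complex_def by auto
next
  fix S :: "nat set" assume S: "S \<noteq> {}" "S \<subseteq> {0..n}" "card S \<le> 5"
  then have "S \<in> small_vertex_sets n" unfolding small_vertex_sets_def by blast
  then obtain w where w: "w \<notin> S" "\<And>\<sigma>. \<sigma> \<in> cone_faces S w \<Longrightarrow> X \<sigma>"
    using coned unfolding all_small_sets_coned_def by blast
  have cone: "insert w \<tau> \<in> lower_complex X"
    if \<tau>: "\<tau> \<in> lower_complex X \<or> \<tau> = {}" "\<tau> \<subseteq> S" "card \<tau> \<le> 2" for \<tau>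
    unfolding lower_complex_def
  proof (intro CollectI conjI allI impI)
    fix \<rho> assume \<rho>: "\<rho> \<noteq> {} \<and> \<rho> \<subseteq> insert w \<tau>"
    show "X \<rho>"
    proof (cases "w \<in> \<rho>")
      case False
      then have "\<rho> \<subseteq> \<tau>" "\<tau> \<noteq> {}" using \<rho> by auto
      then show ?thesis using \<tau>(1) \<rho> unfolding lower_complex_def by blast
    next
      case True
      have "finite \<tau>" using finite_subset[OF subset_trans[OF \<tau>(2) S(2)]] by simp
      moreover have "\<rho> - {w} \<subseteq> \<tau>" using \<rho> by auto
      ultimately have "card (\<rho> - {w}) \<le> 2" using \<tau>(3) card_mono le_trans by blast
      moreover have "\<rho> - {w} \<subseteq> S" using \<open>\<rho> - {w} \<subseteq> \<tau>\<close> \<tau>(2) by blast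
      ultimately have "\<rho> \<in> cone_faces S w"
        unfolding cone_faces_def using True by (intro image_eqI[of _ _ "\<rho> - {w}"]) auto
      then show ?thesis by (rule w(2))
    qed
  qed simp
  then have "{w} \<in> lower_complex X" using cone[of "{}"] by simp
  with cone show "\<exists>w. {w} \<in> lower_complex X \<and>
      (\<forall>\<tau>\<in>lower_complex X. \<tau> \<subseteq> S \<and> card \<tau> \<le> 2 \<longrightarrow> insert w \<tau> \<in> lower_complex X)"
    by blast
qed simp_all

locale lower_model_bounded_below =
  fixes n :: nat and q :: "nat set \<Rightarrow> real" and p :: real
  assumes three_le_n: "3 \<le> n" and p_nonneg: "0 \<le> p"
    and q_bounds: "\<sigma> \<in> lower_faces n \<Longrightarrow> p \<le> q \<sigma> \<and> q \<sigma> \<le> 1"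
begin

lemma p_le_1: "p \<le> 1"
proof -
  have "{0} \<subseteq> {0..n}" "1 \<in> {0..n}" "1 \<notin> {0::nat}" using three_le_n by auto
  then have "{0} \<subset> {0..n}" by blast
  then show ?thesis using q_bounds[of "{0}"] unfolding lower_faces_def by auto
qed

lemma prob_cone_faces_ge:
  assumes "S \<subseteq> {0..n}" "card S \<le> 5" "w \<le> n"
  shows "p ^ 32 \<le> measure_pmf.prob (lower_hypergraph n q) {X. \<forall>\<sigma>\<in>cone_faces S w. X \<sigma>}"
proof -
  have faces: "cone_faces S w \<subseteq> lower_faces n"
    using cone_faces_subset_lower_faces assms three_le_n by blast
  have "finite S" using finite_subset[OF assms(1)] by simp
  have q_01: "0 \<le> q \<sigma> \<and> q \<sigma> \<le> 1" if "\<sigma> \<in> cone_faces S w" for \<sigma>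
    using q_bounds[of \<sigma>] faces that p_nonneg by auto
  have "p ^ 32 \<le> p ^ card (cone_faces S w)"
    using card_cone_faces_le[OF \<open>finite S\<close> assms(2)] p_nonneg p_le_1 by (rule power_decreasing)
  also have "\<dots> = (\<Prod>\<sigma>\<in>cone_faces S w. p)" by simp
  also have "\<dots> \<le> (\<Prod>\<sigma>\<in>cone_faces S w. q \<sigma>)"
    using faces q_bounds p_nonneg by (intro prod_mono) auto
  also have "\<dots> = measure_pmf.prob (lower_hypergraph n q) {X. \<forall>\<sigma>\<in>cone_faces S w. X \<sigma>}"
    unfolding lower_hypergraph_def using faces q_01
    by (intro prob_Pi_bernoulli_all_true[symmetric] finite_lower_faces)
  finally show ?thesis .
qed

lemma prob_not_coned_le:
  assumes "S \<in> small_vertex_sets n"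
  shows "measure_pmf.prob (lower_hypergraph n q) {X. \<forall>w\<in>{0..n} - S. \<not> (\<forall>\<sigma>\<in>cone_faces S w. X \<sigma>)}
    \<le> (1 - p ^ 32) ^ (n - 4)"
proof -
  have S: "S \<subseteq> {0..n}" "card S \<le> 5"
    using assms unfolding small_vertex_sets_def by auto
  have "finite S" using finite_subset[OF S(1)] by simp
  let ?W = "{0..n} - S"
  have "measure_pmf.prob (lower_hypergraph n q) {X. \<forall>w\<in>?W. \<not> (\<forall>\<sigma>\<in>cone_faces S w. X \<sigma>)} =
      (\<Prod>w\<in>?W. measure_pmf.prob (lower_hypergraph n q) {X. \<not> (\<forall>\<sigma>\<in>cone_faces S w. X \<sigma>)})"
    unfolding lower_hypergraph_def
    using cone_faces_subset_lower_faces S(1) three_le_n cone_faces_disjoint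
    by (intro prob_Pi_pmf_all_indep[where D = "cone_faces S"] finite_lower_faces)
      (auto simp: determined_by_def)
  also have "\<dots> \<le> (\<Prod>w\<in>?W. 1 - p ^ 32)"
  proof (rule prod_mono)
    fix w assume "w \<in> ?W"
    then show "0 \<le> measure_pmf.prob (lower_hypergraph n q) {X. \<not> (\<forall>\<sigma>\<in>cone_faces S w. X \<sigma>)} \<and>
        measure_pmf.prob (lower_hypergraph n q) {X. \<not> (\<forall>\<sigma>\<in>cone_faces S w. X \<sigma>)} \<le> 1 - p ^ 32"
      using prob_cone_faces_ge[OF S(1,2), of w] measure_pmf_prob_Collect_not[of _ "\<lambda>X. \<forall>\<sigma>\<in>cone_faces S w. X \<sigma>"]
      by (simp del: ball_simps)
  qed
  also have "\<dots> = (1 - p ^ 32) ^ card ?W" by simp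
  also have "\<dots> \<le> (1 - p ^ 32) ^ (n - 4)"
  proof (rule power_decreasing)
    show "n - 4 \<le> card ?W" using S \<open>finite S\<close> by (simp add: card_Diff_subset)
    show "0 \<le> 1 - p ^ 32" "1 - p ^ 32 \<le> 1"
      using p_nonneg p_le_1 by (auto simp: power_le_one)
  qed
  finally show ?thesis .
qed

lemma prob_not_all_small_sets_coned_le:
  "measure_pmf.prob (lower_hypergraph n q) {X. \<not> all_small_sets_coned n X}
    \<le> (real n + 1) ^ 5 * (1 - p ^ 32) ^ (n - 4)"
proof -
  let ?bad = "\<lambda>S. {X. \<forall>w\<in>{0..n} - S. \<not> (\<forall>\<sigma>\<in>cone_faces S w. X \<sigma>)}"
  have "{X. \<not> all_small_sets_coned n X} = (\<Union>S\<in>small_vertex_sets n. ?bad S)"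
    unfolding all_small_sets_coned_def by auto
  then have "measure_pmf.prob (lower_hypergraph n q) {X. \<not> all_small_sets_coned n X}
      \<le> (\<Sum>S\<in>small_vertex_sets n. measure_pmf.prob (lower_hypergraph n q) (?bad S))"
    by (simp add: measure_pmf.finite_measure_subadditive_finite finite_small_vertex_sets)
  also have "\<dots> \<le> (\<Sum>S\<in>small_vertex_sets n. (1 - p ^ 32) ^ (n - 4))"
    by (intro sum_mono prob_not_coned_le)
  also have "\<dots> = real (card (small_vertex_sets n)) * (1 - p ^ 32) ^ (n - 4)" by simp
  also have "\<dots> \<le> (real n + 1) ^ 5 * (1 - p ^ 32) ^ (n - 4)"
  proof (rule mult_right_mono)
    show "real (card (small_vertex_sets n)) \<le> (real n + 1) ^ 5"
      using card_small_vertex_sets_le[of n] by (metis of_nat_1 of_nat_add of_nat_le_iff of_nat_power)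
    show "0 \<le> (1 - p ^ 32) ^ (n - 4)"
      using p_nonneg p_le_1 by (simp add: power_le_one)
  qed
  finally show ?thesis .
qed

lemma prob_simply_connected_ge:
  "1 - (real n + 1) ^ 5 * (1 - p ^ 32) ^ (n - 4) \<le>
    measure_pmf.prob (lower_hypergraph n q) {X. simply_connected (realization (lower_complex X))}"
proof -
  have "measure_pmf.prob (lower_hypergraph n q) {X. all_small_sets_coned n X}
      \<le> measure_pmf.prob (lower_hypergraph n q) {X. simply_connected (realization (lower_complex X))}"
    using coned_complex.simply_connected_realization[OF coned_complex_lower_complex]
    by (intro measure_pmf.finite_measure_mono_AE AE_pmfI) auto
  moreover have "measure_pmf.prob (lower_hypergraph n q) {X. all_small_sets_coned n X}
      = 1 - measure_pmf.prob (lower_hypergraph n q) {X. \<not> all_small_sets_coned n X}"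
    using measure_pmf_prob_Collect_not[of "lower_hypergraph n q" "all_small_sets_coned n"] by linarith
  ultimately show ?thesis using prob_not_all_small_sets_coned_le by linarith
qed

end

theorem proposition6p3:
  fixes p P :: real and q :: "nat \<Rightarrow> nat set \<Rightarrow> real"
  assumes "0 < p" and "p \<le> P" and "P < 1"
    and "\<And>n \<sigma>. \<sigma> \<in> lower_faces n \<Longrightarrow> p \<le> q n \<sigma> \<and> q n \<sigma> \<le> P"
  shows "(\<lambda>n. measure_pmf.prob (lower_hypergraph n (q n))
            {X. simply_connected (realization (lower_complex X))}) \<longlonglongrightarrow> 1"
proof -
  define c where "c = 1 - p ^ 32"
  have c: "0 < c" "c < 1"
    unfolding c_def using assms(1-3) by (auto simp: power_less_one_iff)
  have model: "lower_model_bounded_below n (q n) p" if "3 \<le> n" for n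
  proof
    show "3 \<le> n" "0 \<le> p" using that assms(1) by auto
    show "p \<le> q n \<sigma> \<and> q n \<sigma> \<le> 1" if "\<sigma> \<in> lower_faces n" for \<sigma>
      using assms(3) assms(4)[OF that] by auto
  qed
  have lower: "\<forall>\<^sub>F n in sequentially. 1 - (real n + 1) ^ 5 * c ^ (n - 4) \<le>
      measure_pmf.prob (lower_hypergraph n (q n)) {X. simply_connected (realization (lower_complex X))}"
    unfolding c_def using eventually_ge_at_top[of 3]
    by eventually_elim (rule lower_model_bounded_below.prob_simply_connected_ge[OF model])
  have upper: "\<forall>\<^sub>F n in sequentially.
      measure_pmf.prob (lower_hypergraph n (q n)) {X. simply_connected (realization (lower_complex X))} \<le> 1"
    by (simp add: measure_pmf.prob_le_1)
  have "(\<lambda>n. (real n + 5) ^ 5 * c ^ n) \<longlonglongrightarrow> 0"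
    using c by real_asymp
  then have "(\<lambda>n. (real (n + 4) + 1) ^ 5 * c ^ (n + 4 - 4)) \<longlonglongrightarrow> 0"
    by (simp add: add.assoc)
  then have "(\<lambda>n. (real n + 1) ^ 5 * c ^ (n - 4)) \<longlonglongrightarrow> 0"
    by (rule LIMSEQ_offset[where k = 4])
  then have "(\<lambda>n. 1 - (real n + 1) ^ 5 * c ^ (n - 4)) \<longlonglongrightarrow> 1 - 0"
    by (intro tendsto_diff tendsto_const)
  then show ?thesis by (intro tendsto_sandwich[OF lower upper]) auto
qed

end
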